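(* Assume $\mu$ is strongly irreducible and contracting and satisfies (FE1) and (FE3). Then for every fixed $n\ge1$, \[ \sup_{m\ge 1}\frac{\|S_m(\sigma^n\omega)\|_2}{\|S_{m+n}(\omega)\|_2}<\infty\quad\text{a.s.} \]
   Context: Setup. Fix $d\ge 1$. Let $\lambda$ be a Borel probability measure on $GL(d,\mathbb R)\times M(d,\mathbb R)$, $\Omega=(GL(d,\mathbb R)\times M(d,\mathbb R))^{\mathbb Z}$ with $\mathbb P=\lambda^{\otimes\mathbb Z}$ and $\sigma$ the left shift. Write $\omega_0=(A(\omega),B(\omega))$, $A_n(\omega)=A(\sigma^{n-1}\omega)$. $\mu$ is the law of $A_1$. $S_n(\omega)=A_n(\omega)\cdots A_1(\omega)$, so $S_m(\sigma^n\omega)=A_{n+m}(\omega)\cdots A_{n+1}(\omega)$. $\|\cdot\|_2$ is the Euclidean operator norm. Strongly irreducible: no finite union of proper subspaces invariant under the closed semigroup $\mathcal S_\mu$ generated by the support of $\mu$. Contracting: some $M_n\in\mathcal S_\mu$ with $M_n/\|M_n\|$ converging to a rank one matrix. (FE1): $\mathbb E[\log^+\|A_1\|]<\infty$. (FE3): $\mathbb E[\log^+\|A_1^{-1}\|]<\infty$. *)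

theory Defs
  imports "HOL-Probability.Probability"
begin

type_synonym 'd mat = "real^'d^'d"

definition opnorm :: "'d::finite mat \<Rightarrow> real" where
  "opnorm M = onorm (\<lambda>x. M *v x)"

definition shift :: "(int \<Rightarrow> 'a) \<Rightarrow> (int \<Rightarrow> 'a)" where
  "shift \<omega> = (\<lambda>k. \<omega> (k + 1))"

definition Amat :: "(int \<Rightarrow> 'd mat \<times> 'd mat) \<Rightarrow> 'd::finite mat" where
  "Amat \<omega> = fst (\<omega> 0)"

definition An :: "nat \<Rightarrow> (int \<Rightarrow> 'd mat \<times> 'd mat) \<Rightarrow> 'd::finite mat" where
  "An n \<omega> = Amat ((shift ^^ (n - 1)) \<omega>)"

primrec Sprod :: "nat \<Rightarrow> (int \<Rightarrow> 'd mat \<times> 'd mat) \<Rightarrow> 'd::finite mat" where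
  "Sprod 0 \<omega> = mat 1"
| "Sprod (Suc n) \<omega> = An (Suc n) \<omega> ** Sprod n \<omega>"

definition msupp :: "'d::finite mat measure \<Rightarrow> 'd mat set" where
  "msupp \<mu> = {M. \<forall>e>0. emeasure \<mu> (ball M e) > 0}"

inductive_set semigrp :: "'d::finite mat set \<Rightarrow> 'd mat set" for G where
  gen: "M \<in> G \<Longrightarrow> M \<in> semigrp G"
| mult: "M \<in> semigrp G \<Longrightarrow> N \<in> semigrp G \<Longrightarrow> M ** N \<in> semigrp G"

definition closed_semigrp :: "'d::finite mat measure \<Rightarrow> 'd mat set" where
  "closed_semigrp \<mu> = closure (semigrp (msupp \<mu>))"

definition strongly_irreducible :: "'d::finite mat measure \<Rightarrow> bool" where
  "strongly_irreducible \<mu> \<longleftrightarrow>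
     \<not> (\<exists>\<V>::(real^'d) set set. finite \<V> \<and> \<V> \<noteq> {} \<and>
          (\<forall>V\<in>\<V>. subspace V \<and> V \<noteq> {0} \<and> V \<noteq> UNIV) \<and>
          (\<forall>g\<in>closed_semigrp \<mu>. (\<lambda>x. g *v x) ` (\<Union>\<V>) \<subseteq> \<Union>\<V>))"

definition contracting :: "'d::finite mat measure \<Rightarrow> bool" where
  "contracting \<mu> \<longleftrightarrow>
     (\<exists>M::nat \<Rightarrow> 'd mat. \<exists>P. (\<forall>n. M n \<in> closed_semigrp \<mu>) \<and>
        ((\<lambda>n. (1 / opnorm (M n)) *\<^sub>R M n) \<longlonglongrightarrow> P) \<and> rank P = 1)"

end

theory Submission
  imports Defs
begin

text \<open>
  The statement holds for every i.i.d. sequence of invertible matrices: the cocycle identity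
  \<open>S\<^sub>m\<^sub>+\<^sub>n(\<omega>) = S\<^sub>m(\<sigma>\<^sup>n\<omega>) S\<^sub>n(\<omega>)\<close> gives \<open>S\<^sub>m(\<sigma>\<^sup>n\<omega>) = S\<^sub>m\<^sub>+\<^sub>n(\<omega>) S\<^sub>n(\<omega>)\<^sup>-\<^sup>1\<close>, so by
  submultiplicativity of the operator norm the quotient is bounded by \<open>\<parallel>S\<^sub>n(\<omega>)\<^sup>-\<^sup>1\<parallel>\<close>,
  uniformly in \<open>m\<close>.
\<close>

lemma funpow_shift: "(shift ^^ j) \<omega> = (\<lambda>k. \<omega> (k + int j))"
  by (induction j arbitrary: \<omega>) (auto simp: shift_def algebra_simps)

lemma An_Suc: "An (Suc k) \<omega> = fst (\<omega> (int k))"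
  by (simp add: An_def Amat_def funpow_shift)

lemma Sprod_add: "Sprod (m + n) \<omega> = Sprod m ((shift ^^ n) \<omega>) ** Sprod n \<omega>"
proof (induction m)
  case 0
  then show ?case by (simp add: matrix_mul_lid)
next
  case (Suc m)
  have "An (Suc (m + n)) \<omega> = An (Suc m) ((shift ^^ n) \<omega>)"
    by (simp add: An_Suc funpow_shift add.commute)
  with Suc show ?case by (simp add: matrix_mul_assoc)
qed

lemma invertible_Sprod:
  assumes "\<forall>k<n. invertible (fst (\<omega> (int k)))"
  shows "invertible (Sprod n \<omega>)"
  using assms
proof (induction n)
  case 0
  then show ?case by (simp add: invertible_def matrix_mul_lid)
next
  case (Suc n)
  then show ?case by (simp add: An_Suc invertible_mult)
qed

lemma opnorm_nonneg: "0 \<le> opnorm (X :: 'd::finite mat)"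
  unfolding opnorm_def by (rule onorm_pos_le) simp

lemma opnorm_matrix_mul_le: "opnorm (X ** Y) \<le> opnorm X * opnorm (Y :: 'd::finite mat)"
proof -
  have "(\<lambda>x. (X ** Y) *v x) = (\<lambda>x. X *v x) \<circ> (\<lambda>x. Y *v x)"
    by (auto simp: matrix_vector_mul_assoc)
  then show ?thesis
    unfolding opnorm_def by (metis onorm_compose matrix_vector_mul_bounded_linear)
qed

lemma opnorm_Sprod_shift_le:
  assumes "invertible (Sprod n \<omega>)"
  obtains C where "\<And>m. opnorm (Sprod m ((shift ^^ n) \<omega>)) \<le> opnorm (Sprod (m + n) \<omega>) * C"
proof -
  obtain B where B: "Sprod n \<omega> ** B = mat 1"
    using assms invertible_right_inverse by blast
  have "Sprod m ((shift ^^ n) \<omega>) = Sprod (m + n) \<omega> ** B" for m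
    by (simp add: Sprod_add matrix_mul_assoc[symmetric] B matrix_mul_rid)
  then show ?thesis
    using that[of "opnorm B"] by (simp add: opnorm_matrix_mul_le)
qed

lemma bdd_above_divide_image:
  fixes f g :: "'a \<Rightarrow> real"
  assumes "\<And>x. x \<in> A \<Longrightarrow> 0 \<le> g x" and "\<And>x. x \<in> A \<Longrightarrow> f x \<le> g x * C"
  shows "bdd_above ((\<lambda>x. f x / g x) ` A)"
proof (rule bdd_aboveI2)
  fix x
  assume "x \<in> A"
  show "f x / g x \<le> max 0 C"
  proof (cases "g x = 0")
    case False
    with assms \<open>x \<in> A\<close> have "0 < g x" by force
    have "f x \<le> g x * C" using assms(2) \<open>x \<in> A\<close> .
    also have "\<dots> \<le> g x * max 0 C" using \<open>0 < g x\<close> by (intro mult_left_mono) auto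
    finally show ?thesis using \<open>0 < g x\<close> by (simp add: divide_le_eq mult.commute)
  qed simp
qed

lemma AE_PiM_initial_components:
  assumes "prob_space M" and "AE p in M. P p"
  shows "AE \<omega> in PiM UNIV (\<lambda>_::int. M). \<forall>k<n. P (\<omega> (int k))"
proof -
  have "AE \<omega> in PiM UNIV (\<lambda>_::int. M). P (\<omega> (int k))" for k
    using AE_PiM_component[of UNIV "\<lambda>_::int. M" "int k" P] assms by auto
  then have "AE \<omega> in PiM UNIV (\<lambda>_::int. M). \<forall>k\<in>{..<n}. P (\<omega> (int k))"
    by (intro eventually_ball_finite) auto
  then show ?thesis by (rule eventually_mono) simp
qed

theorem corollary4p4:
  fixes lam :: "('d::finite mat \<times> 'd mat) measure"
  assumes lam_prob: "prob_space lam"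
    and lam_borel: "sets lam = sets borel"
    and lam_GL: "AE p in lam. invertible (fst p)"
    and irr: "strongly_irreducible (distr lam borel fst)"
    and contr: "contracting (distr lam borel fst)"
    and FE1: "(\<integral>\<^sup>+ \<omega>. ennreal (max 0 (ln (opnorm (An 1 \<omega>)))) \<partial>(PiM UNIV (\<lambda>_::int. lam))) < \<infinity>"
    and FE3: "(\<integral>\<^sup>+ \<omega>. ennreal (max 0 (ln (opnorm (matrix_inv (An 1 \<omega>))))) \<partial>(PiM UNIV (\<lambda>_::int. lam))) < \<infinity>"
    and n_pos: "n \<ge> 1"
  shows "AE \<omega> in PiM UNIV (\<lambda>_::int. lam).
           bdd_above ((\<lambda>m. opnorm (Sprod m ((shift ^^ n) \<omega>)) / opnorm (Sprod (m + n) \<omega>)) ` {1..})"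
  using AE_PiM_initial_components[OF lam_prob lam_GL, of n]
proof (rule AE_mp, intro AE_I2 impI)
  fix \<omega> :: "int \<Rightarrow> 'd mat \<times> 'd mat"
  assume "\<forall>k<n. invertible (fst (\<omega> (int k)))"
  then obtain C where "\<And>m. opnorm (Sprod m ((shift ^^ n) \<omega>)) \<le> opnorm (Sprod (m + n) \<omega>) * C"
    using opnorm_Sprod_shift_le invertible_Sprod by blast
  then show "bdd_above ((\<lambda>m. opnorm (Sprod m ((shift ^^ n) \<omega>)) / opnorm (Sprod (m + n) \<omega>)) ` {1..})"
    by (intro bdd_above_divide_image opnorm_nonneg)
qed

end
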